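(* Let $q$ be an odd prime power, $d\ge1$, $Q=q^d$, $n\ge 1$, and let $L(x)$ be an $\mathbb{F}_Q$-linearized polynomial. For the quadratic form $x\mapsto \mathrm{Tr}_{\mathbb{F}_{Q^n}/\mathbb{F}_Q}(xL(x))$ over $\mathbb{F}_Q$, write its number of zeros in $\mathbb{F}_{Q^n}$ as $Q^{n-1}+\lambda(Q-1)Q^{\frac{n+w}{2}-1}$, and for the quadratic form $x\mapsto \mathrm{Tr}_{\mathbb{F}_{q^{dn}}/\mathbb{F}_q}(xL(x))$ over $\mathbb{F}_q$ (on the same field $\mathbb{F}_{q^{dn}}=\mathbb{F}_{Q^n}$), write its number of zeros as $q^{dn-1}+\lambda'(q-1)q^{\frac{dn+w'}{2}-1}$. If $\lambda\neq 0$, then $\lambda'=\lambda$.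
   Context: An $\mathbb{F}_Q$-linearized polynomial is one of the form $\sum_i c_i x^{Q^i}$ with $c_i$ in a finite extension of $\mathbb{F}_Q$ (here the $x\mapsto xL(x)$ traces are assumed to define quadratic forms over the respective base fields). For a quadratic form $F$ over a finite field $k$ of odd characteristic on a finite-dimensional $k$-space $V$, its radical is $\{x\in V: F(x+y)-F(x)-F(y)=0\ \forall y\in V\}$; if $\dim_k V=N$ and the radical has $k$-dimension $w$, the number of zeros of $F$ in $V$ equals $|k|^{N-1}+\lambda(|k|-1)|k|^{\frac{N+w}{2}-1}$ for a unique $\lambda\in\{-1,0,1\}$ (the sign), with $\lambda=0$ exactly when $N-w$ is odd. Above, $w$ and $w'$ are the radical dimensions over $\mathbb{F}_Q$ and $\mathbb{F}_q$ respectively. *)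

theory Defs
  imports "HOL-Computational_Algebra.Primes" "HOL-Library.Cardinality" Complex_Main
begin

text \<open>The finite field F_{Q^n} = F_{q^{dn}} is modelled as a finite field type 'a of
  cardinality q^(d*n). Frobenius-type trace from 'a down to the subfield of order Q
  (fixed field of x \<mapsto> x^Q): Tr(x) = sum_{i<n} x^(Q^i).\<close>

definition frob_trace :: "nat \<Rightarrow> nat \<Rightarrow> 'a::field \<Rightarrow> 'a" where
  "frob_trace Q n x = (\<Sum>i<n. x ^ (Q ^ i))"

definition linearized :: "nat \<Rightarrow> (nat \<Rightarrow> 'a::field) \<Rightarrow> nat \<Rightarrow> 'a \<Rightarrow> 'a" where
  "linearized Q c m x = (\<Sum>i<m. c i * x ^ (Q ^ i))"

definition qf_radical :: "('a::ab_group_add \<Rightarrow> 'b::ab_group_add) \<Rightarrow> 'a set" where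
  "qf_radical F = {x. \<forall>y. F (x + y) - F x - F y = 0}"

definition prime_power :: "nat \<Rightarrow> bool" where
  "prime_power q \<longleftrightarrow> (\<exists>p k. prime p \<and> k \<ge> 1 \<and> q = p ^ k)"

end

theory Submission
  imports Defs "HOL-Computational_Algebra.Polynomial"
begin

text \<open>
  With \<open>Q = q^d\<close>, the map \<open>F x = Tr_{Q^n/Q}(x L(x))\<close> is a quadratic form over \<open>F_Q\<close>, and
  by transitivity of the trace the second form is \<open>T \<circ> F\<close> with \<open>T = Tr_{Q/q}\<close>.
  If \<open>\<lambda> \<noteq> 0\<close>, then \<open>F\<close> does not have exactly \<open>Q^(n-1)\<close> zeros, and for such a form every
  nonzero value in \<open>F_Q\<close> is attained the same number \<open>C\<close> of times: split off hyperbolic planes,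
  which preserve this property, until the form is anisotropic modulo its radical and hence of rank
  at most 2 there. Counting the zeros of \<open>T \<circ> F\<close> as \<open>N_0 + (|ker T| - 1) C\<close> with
  \<open>|ker T| = Q/q\<close>, and eliminating \<open>C\<close> by \<open>Q^n = N_0 + (Q - 1) C\<close>, gives
  \<open>\<lambda>' (q - 1) q^((dn + w')/2 - 1) = \<lambda> (q - 1) (Q/q) Q^((n + w)/2 - 1)\<close>, so the signs agree;
  the radical dimensions enter only through these positive powers.
\<close>

section \<open>Binary quadratic forms over a subfield\<close>

lemma card_Collect_bij_betw:
  assumes "bij_betw f A B"
  shows "card {x \<in> B. P x} = card {a \<in> A. P (f a)}"
proof -
  have "{x \<in> B. P x} = f ` {a \<in> A. P (f a)}" using assms unfolding bij_betw_def by auto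
  moreover have "inj_on f {a \<in> A. P (f a)}" using assms unfolding bij_betw_def
    by (auto intro: inj_on_subset)
  ultimately show ?thesis by (simp add: card_image)
qed

lemma card_Times_Collect:
  assumes "finite A" "finite B"
  shows "card {p \<in> A \<times> B. P (fst p) (snd p)} = (\<Sum>a\<in>A. card {b \<in> B. P a b})"
proof -
  have "{p \<in> A \<times> B. P (fst p) (snd p)} = Sigma A (\<lambda>a. {b \<in> B. P a b})" by auto
  then show ?thesis using assms by (simp add: card_SigmaI)
qed

locale subfield =
  fixes K :: "'a::{finite,field} set"
  assumes zero_closed: "0 \<in> K" and one_closed: "1 \<in> K"
    and add_closed: "a \<in> K \<Longrightarrow> b \<in> K \<Longrightarrow> a + b \<in> K"
    and mult_closed: "a \<in> K \<Longrightarrow> b \<in> K \<Longrightarrow> a * b \<in> K"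
    and uminus_closed: "a \<in> K \<Longrightarrow> - a \<in> K"
    and inverse_closed: "a \<in> K \<Longrightarrow> inverse a \<in> K"
begin

lemma diff_closed: "a \<in> K \<Longrightarrow> b \<in> K \<Longrightarrow> a - b \<in> K"
  using add_closed uminus_closed by (metis diff_conv_add_uminus)

lemma divide_closed: "a \<in> K \<Longrightarrow> b \<in> K \<Longrightarrow> a / b \<in> K"
  using mult_closed inverse_closed by (metis divide_inverse)

lemma power2_closed: "a \<in> K \<Longrightarrow> a\<^sup>2 \<in> K"
  using mult_closed by (simp add: power2_eq_square)

lemma card_ge_two: "card K \<ge> 2"
  using card_mono[of K "{0, 1}"] zero_closed one_closed by simp

lemma card_pairs_mult_eq:
  assumes "c \<in> K"
  shows "card {p \<in> K \<times> K. fst p * snd p = c} = (if c = 0 then 2 * card K - 1 else card K - 1)"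
proof (cases "c = 0")
  case True
  have "{p \<in> K \<times> K. fst p * snd p = c} = {0} \<times> K \<union> K \<times> {0}" using True zero_closed by auto
  moreover have "card ({0} \<times> K) + card (K \<times> {0}) = card ({0} \<times> K \<union> K \<times> {0}) + card ({0} \<times> K \<inter> K \<times> {0})"
    using card_Un_Int[of "{0} \<times> K" "K \<times> {0}"] by simp
  moreover have "{0} \<times> K \<inter> K \<times> {0} = {(0, 0)}" using zero_closed by auto
  ultimately show ?thesis using True by (simp add: card_cartesian_product)
next
  case False
  have "bij_betw (\<lambda>s. (s, c / s)) (K - {0}) {p \<in> K \<times> K. fst p * snd p = c}"
    by (rule bij_betw_byWitness[where f' = fst]) (use False assms divide_closed in auto)
  from bij_betw_same_card[OF this] False zero_closed show ?thesis by (simp add: card_Diff_singleton)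
qed

definition binary_count :: "'a \<Rightarrow> 'a \<Rightarrow> 'a \<Rightarrow> nat" where
  "binary_count c e a = card {p \<in> K \<times> K. c * (fst p)\<^sup>2 + e * (snd p)\<^sup>2 = a}"

context
  assumes two_neq_zero: "(2::'a) \<noteq> 0"
begin

lemma card_squares: "2 * card ((\<lambda>t. t\<^sup>2) ` K) = card K + 1"
proof -
  let ?S = "(\<lambda>t. t\<^sup>2) ` (K - {0})"
  have fibre: "card {t \<in> K - {0}. t\<^sup>2 = y} = 2" if "y \<in> ?S" for y
  proof -
    from that obtain t0 where t0: "t0 \<in> K - {0}" "y = t0\<^sup>2" by auto
    then have "t0 + t0 \<noteq> 0" using two_neq_zero by (simp flip: mult_2)
    then have "t0 \<noteq> - t0" by (simp add: eq_neg_iff_add_eq_0)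
    moreover have "{t \<in> K - {0}. t\<^sup>2 = y} = {t0, - t0}"
      using t0 uminus_closed by (auto simp: power2_eq_iff)
    ultimately show ?thesis by simp
  qed
  have "K - {0} = (\<Union>y\<in>?S. {t \<in> K - {0}. t\<^sup>2 = y})" by auto
  also have "card \<dots> = (\<Sum>y\<in>?S. card {t \<in> K - {0}. t\<^sup>2 = y})"
    by (rule card_UN_disjoint) auto
  also have "\<dots> = 2 * card ?S" using fibre by simp
  finally have "card (K - {0}) = 2 * card ?S" .
  moreover have "(\<lambda>t. t\<^sup>2) ` K = insert 0 ?S" "0 \<notin> ?S" using zero_closed by auto
  ultimately show ?thesis using zero_closed card_ge_two by (simp add: card_Diff_singleton)
qed

lemma binary_form_represents:
  assumes c: "c \<in> K - {0}" and e: "e \<in> K - {0}" and a: "a \<in> K"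
  shows "\<exists>s\<in>K. \<exists>t\<in>K. c * s\<^sup>2 + e * t\<^sup>2 = a"
proof -
  \<comment> \<open>Both value sets have \<open>(|K| + 1)/2\<close> elements, so they meet inside \<open>K\<close>.\<close>
  define A where "A = (\<lambda>y. c * y) ` (\<lambda>t. t\<^sup>2) ` K"
  define B where "B = (\<lambda>y. a - e * y) ` (\<lambda>t. t\<^sup>2) ` K"
  have "card A = card ((\<lambda>t. t\<^sup>2) ` K)" "card B = card ((\<lambda>t. t\<^sup>2) ` K)"
    unfolding A_def B_def using c e by (auto intro!: card_image inj_onI)
  moreover have "card (A \<union> B) \<le> card K"
    unfolding A_def B_def using c e a mult_closed diff_closed power2_closed by (intro card_mono) auto
  moreover have "card A + card B = card (A \<union> B) + card (A \<inter> B)"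
    by (rule card_Un_Int) auto
  ultimately have "A \<inter> B \<noteq> {}" using card_squares by auto
  then obtain s t where "s \<in> K" "t \<in> K" "c * s\<^sup>2 = a - e * t\<^sup>2" unfolding A_def B_def by auto
  then show ?thesis by (auto simp: algebra_simps)
qed

lemma binary_count_mult:
  assumes c: "c \<in> K - {0}" and e: "e \<in> K - {0}" and \<nu>: "\<nu> \<in> K - {0}"
  shows "binary_count c e (\<nu> * a) = binary_count c e a"
proof -
  \<comment> \<open>Write \<open>\<nu> = \<alpha>\<^sup>2 + r \<beta>\<^sup>2\<close> with \<open>r = e/c\<close>; multiplication by \<open>\<alpha> + \<beta> \<surd>(-r)\<close> scales the form by \<open>\<nu>\<close>.\<close>
  obtain \<alpha> \<beta> where \<alpha>\<beta>: "\<alpha> \<in> K" "\<beta> \<in> K" "c * \<alpha>\<^sup>2 + e * \<beta>\<^sup>2 = c * \<nu>"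
    using binary_form_represents[OF c e, of "c * \<nu>"] c \<nu> mult_closed by auto
  define r where "r = e / c"
  have r: "r \<in> K" "e = c * r" using c e divide_closed unfolding r_def by auto
  have \<nu>_eq: "\<nu> = \<alpha>\<^sup>2 + r * \<beta>\<^sup>2"
  proof -
    have "c * \<nu> = c * (\<alpha>\<^sup>2 + r * \<beta>\<^sup>2)" using \<alpha>\<beta>(3) unfolding r(2) by (simp add: algebra_simps)
    then show ?thesis using c by simp
  qed
  define \<Phi> where "\<Phi> = (\<lambda>p. c * (fst p)\<^sup>2 + e * (snd p)\<^sup>2)"
  define f where "f = (\<lambda>(s, t). (\<alpha> * s - r * \<beta> * t, \<beta> * s + \<alpha> * t))"
  have \<Phi>_f: "\<Phi> (f p) = \<nu> * \<Phi> p" for p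
    unfolding \<Phi>_def f_def r(2) \<nu>_eq by (simp add: case_prod_beta power2_eq_square algebra_simps)
  have recover: "\<nu> * s = \<alpha> * fst (f (s, t)) + r * \<beta> * snd (f (s, t))"
    "\<nu> * t = \<alpha> * snd (f (s, t)) - \<beta> * fst (f (s, t))" for s t
    unfolding f_def \<nu>_eq by (simp_all add: power2_eq_square algebra_simps)
  have "inj_on f (K \<times> K)"
  proof (rule inj_onI, clarify)
    fix s t s' t' assume "f (s, t) = f (s', t')"
    then have "\<nu> * s = \<nu> * s'" "\<nu> * t = \<nu> * t'" using recover by metis+
    then show "s = s' \<and> t = t'" using \<nu> by simp
  qed
  moreover have "f ` (K \<times> K) \<subseteq> K \<times> K"
    unfolding f_def using \<alpha>\<beta> r mult_closed add_closed diff_closed by auto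
  ultimately have "bij_betw f (K \<times> K) (K \<times> K)"
    by (simp add: bij_betw_def endo_inj_surj)
  have count_\<Phi>: "binary_count c e b = card {p \<in> K \<times> K. \<Phi> p = b}" for b
    unfolding binary_count_def \<Phi>_def ..
  have "binary_count c e (\<nu> * a) = card {p \<in> K \<times> K. \<Phi> (f p) = \<nu> * a}"
    unfolding count_\<Phi> by (rule card_Collect_bij_betw) fact
  also have "\<dots> = binary_count c e a"
    unfolding count_\<Phi> \<Phi>_f using \<nu> by simp
  finally show ?thesis .
qed

lemma binary_count_const:
  assumes "c \<in> K - {0}" "e \<in> K - {0}" "a \<in> K - {0}" "b \<in> K - {0}"
  shows "binary_count c e b = binary_count c e a"
  using binary_count_mult[of c e "b / a" a] assms divide_closed by simp

end

end

section \<open>Level sets of quadratic forms\<close>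

text \<open>The form lives on the field \<open>'a\<close> regarded as a vector space over its subfield \<open>K\<close>; the
  last two axioms state that the polar form is additive and \<open>K\<close>-homogeneous.\<close>

locale quadratic_form = subfield K for K :: "'a::{finite,field} set" +
  fixes F :: "'a \<Rightarrow> 'a"
  assumes two_neq_zero: "(2::'a) \<noteq> 0"
    and F_closed: "F x \<in> K"
    and F_scale: "t \<in> K \<Longrightarrow> F (t * x) = t\<^sup>2 * F x"
    and F_polar_add:
      "F (x + y + z) - F (x + y) - F z = (F (x + z) - F x - F z) + (F (y + z) - F y - F z)"
    and F_polar_scale: "t \<in> K \<Longrightarrow> F (t * x + y) - F (t * x) - F y = t * (F (x + y) - F x - F y)"
begin

definition polar :: "'a \<Rightarrow> 'a \<Rightarrow> 'a" where
  "polar x y = F (x + y) - F x - F y"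

lemma polar_commute: "polar x y = polar y x"
  unfolding polar_def by (simp add: add.commute)

lemma polar_add_left: "polar (x + y) z = polar x z + polar y z"
  unfolding polar_def by (rule F_polar_add)

lemma polar_add_right: "polar z (x + y) = polar z x + polar z y"
  using polar_add_left[of x y z] by (simp add: polar_commute)

lemma polar_scale_left: "t \<in> K \<Longrightarrow> polar (t * x) y = t * polar x y"
  unfolding polar_def by (rule F_polar_scale)

lemma polar_scale_right: "t \<in> K \<Longrightarrow> polar y (t * x) = t * polar y x"
  using polar_scale_left[of t x y] by (simp add: polar_commute)

lemma polar_diff_right: "polar z (x - y) = polar z x - polar z y"
  using polar_add_right[of z "x - y" y] by simp

lemma polar_closed: "polar x y \<in> K"
  unfolding polar_def using F_closed diff_closed by simp

lemma F_zero: "F 0 = 0"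
  using F_scale[OF zero_closed, of 0] by simp

lemma polar_zero_right: "polar x 0 = 0"
  unfolding polar_def F_zero by simp

lemma F_add: "F (x + y) = F x + F y + polar x y"
  unfolding polar_def by simp

lemma polar_self: "polar x x = 2 * F x"
proof -
  have "(2::'a) \<in> K" using add_closed[OF one_closed one_closed] by (simp add: one_add_one)
  then have "F (x + x) = 2\<^sup>2 * F x" using F_scale[of 2 x] by (simp only: mult_2)
  then show ?thesis unfolding polar_def by (simp add: power2_eq_square algebra_simps)
qed

definition is_subspace :: "'a set \<Rightarrow> bool" where
  "is_subspace W \<longleftrightarrow> 0 \<in> W \<and> (\<forall>x\<in>W. \<forall>y\<in>W. x + y \<in> W) \<and> (\<forall>t\<in>K. \<forall>x\<in>W. t * x \<in> W)"

lemma is_subspaceD: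
  assumes "is_subspace W"
  shows "0 \<in> W" "x \<in> W \<Longrightarrow> y \<in> W \<Longrightarrow> x + y \<in> W" "t \<in> K \<Longrightarrow> x \<in> W \<Longrightarrow> t * x \<in> W"
  using assms unfolding is_subspace_def by auto

lemma is_subspace_diff: "is_subspace W \<Longrightarrow> x \<in> W \<Longrightarrow> y \<in> W \<Longrightarrow> x - y \<in> W"
  using is_subspaceD[of W] uminus_closed[OF one_closed] by (metis diff_conv_add_uminus mult_minus1)

definition orth :: "'a set \<Rightarrow> 'a \<Rightarrow> 'a set" where
  "orth W u = {x \<in> W. polar u x = 0}"

lemma is_subspace_orth: "is_subspace W \<Longrightarrow> is_subspace (orth W u)"
  unfolding is_subspace_def orth_def
  using polar_add_right polar_scale_right polar_zero_right by auto

definition level_count :: "'a set \<Rightarrow> 'a \<Rightarrow> nat" where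
  "level_count W a = card {x \<in> W. F x = a}"

lemma level_count_null:
  "\<forall>x\<in>W. F x = 0 \<Longrightarrow> level_count W a = (if a = 0 then card W else 0)"
  unfolding level_count_def by (auto intro: arg_cong[where f = card])

lemma orth_decomp_anisotropic:
  assumes W: "is_subspace W" and x0: "x0 \<in> W" "F x0 \<noteq> 0"
  shows "bij_betw (\<lambda>(s, w). s * x0 + w) (K \<times> orth W x0) W"
proof -
  define coeff where "coeff x = polar x0 x / (2 * F x0)" for x
  have coeff_closed: "coeff x \<in> K" for x
    unfolding coeff_def using polar_closed F_closed mult_closed divide_closed
      add_closed[OF one_closed one_closed] by (simp add: one_add_one)
  have coeff: "coeff (s * x0 + w) = s" if "s \<in> K" "polar x0 w = 0" for s w
    using that x0(2) two_neq_zero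
    by (simp add: coeff_def polar_add_right polar_scale_right polar_self)
  show ?thesis
  proof (rule bij_betw_byWitness[where f' = "\<lambda>x. (coeff x, x - coeff x * x0)"])
    show "\<forall>p\<in>K \<times> orth W x0. (\<lambda>x. (coeff x, x - coeff x * x0)) ((\<lambda>(s, w). s * x0 + w) p) = p"
      using coeff by (auto simp: orth_def)
    show "\<forall>x\<in>W. (\<lambda>(s, w). s * x0 + w) (coeff x, x - coeff x * x0) = x" by simp
    show "(\<lambda>(s, w). s * x0 + w) ` (K \<times> orth W x0) \<subseteq> W"
      using is_subspaceD[OF W] x0 by (auto simp: orth_def)
    have "polar x0 (x - coeff x * x0) = 0" for x
    proof -
      have "polar x0 (x - coeff x * x0) = polar x0 x - coeff x * (2 * F x0)"
        by (simp add: polar_diff_right polar_scale_right[OF coeff_closed] polar_self)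
      then show ?thesis unfolding coeff_def using x0(2) two_neq_zero by simp
    qed
    then show "(\<lambda>x. (coeff x, x - coeff x * x0)) ` W \<subseteq> K \<times> orth W x0"
      using coeff_closed is_subspace_diff[OF W] is_subspaceD(3)[OF W _ x0(1)] by (auto simp: orth_def)
  qed
qed

lemma level_count_anisotropic_split:
  assumes W: "is_subspace W" and x0: "x0 \<in> W" "F x0 \<noteq> 0"
  shows "level_count W a = (\<Sum>s\<in>K. level_count (orth W x0) (a - s\<^sup>2 * F x0))"
    and "card W = card K * card (orth W x0)"
proof -
  note bij = orth_decomp_anisotropic[OF assms]
  show "card W = card K * card (orth W x0)"
    using bij_betw_same_card[OF bij] by (simp add: card_cartesian_product)
  have F_sum: "F (s * x0 + w) = F w + s\<^sup>2 * F x0" if "s \<in> K" "w \<in> orth W x0" for s w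
    using that F_add[of "s * x0" w] F_scale polar_scale_left by (simp add: orth_def)
  have "level_count W a = card {p \<in> K \<times> orth W x0. F ((\<lambda>(s, w). s * x0 + w) p) = a}"
    unfolding level_count_def by (rule card_Collect_bij_betw[OF bij])
  also have "\<dots> = card {p \<in> K \<times> orth W x0. F (snd p) = a - (fst p)\<^sup>2 * F x0}"
    by (rule arg_cong[where f = card]) (auto simp: F_sum eq_diff_eq)
  also have "\<dots> = (\<Sum>s\<in>K. level_count (orth W x0) (a - s\<^sup>2 * F x0))"
    unfolding level_count_def by (rule card_Times_Collect) auto
  finally show "level_count W a = (\<Sum>s\<in>K. level_count (orth W x0) (a - s\<^sup>2 * F x0))" .
qed

lemma orth_decomp_hyperbolic:
  assumes W: "is_subspace W" and uv: "u \<in> W" "v \<in> W" "F u = 0" "F v = 0" "polar u v = 1"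
  shows "bij_betw (\<lambda>(w, s, t). s * u + t * v + w) (orth (orth W u) v \<times> K \<times> K) W"
proof -
  have uu: "polar u u = 0" and vv: "polar v v = 0" and vu: "polar v u = 1"
    using uv polar_self polar_commute[of u v] by auto
  have coords: "polar v (s * u + t * v + w) = s" "polar u (s * u + t * v + w) = t"
    if "s \<in> K" "t \<in> K" "w \<in> orth (orth W u) v" for s t w
    using that uu vv uv(5) vu by (simp_all add: polar_add_right polar_scale_right orth_def)
  have rest: "polar v (x - polar v x * u - polar u x * v) = 0"
    "polar u (x - polar v x * u - polar u x * v) = 0" for x
    using uu vv uv(5) vu by (simp_all add: polar_diff_right polar_scale_right[OF polar_closed])
  show ?thesis
  proof (rule bij_betw_byWitness[where f' = "\<lambda>x. (x - polar v x * u - polar u x * v, polar v x, polar u x)"])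
    show "\<forall>p\<in>orth (orth W u) v \<times> K \<times> K.
        (\<lambda>x. (x - polar v x * u - polar u x * v, polar v x, polar u x)) ((\<lambda>(w, s, t). s * u + t * v + w) p) = p"
      using coords by auto
    show "\<forall>x\<in>W. (\<lambda>(w, s, t). s * u + t * v + w) (x - polar v x * u - polar u x * v, polar v x, polar u x) = x"
      by simp
    show "(\<lambda>(w, s, t). s * u + t * v + w) ` (orth (orth W u) v \<times> K \<times> K) \<subseteq> W"
      using is_subspaceD[OF W] uv by (auto simp: orth_def)
    show "(\<lambda>x. (x - polar v x * u - polar u x * v, polar v x, polar u x)) ` W \<subseteq> orth (orth W u) v \<times> K \<times> K"
      using rest polar_closed is_subspace_diff[OF W] is_subspaceD(3)[OF W polar_closed] uv
      by (auto simp: orth_def)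
  qed
qed

lemma card_hyperbolic_split:
  assumes "is_subspace W" "u \<in> W" "v \<in> W" "F u = 0" "F v = 0" "polar u v = 1"
  shows "card W = card K * card K * card (orth (orth W u) v)"
  using bij_betw_same_card[OF orth_decomp_hyperbolic[OF assms]]
  by (simp add: card_cartesian_product mult_ac)

lemma level_count_hyperbolic_split:
  assumes W: "is_subspace W" and uv: "u \<in> W" "v \<in> W" "F u = 0" "F v = 0" "polar u v = 1"
    and a: "a \<in> K"
  shows "level_count W a = (card K - 1) * card (orth (orth W u) v) + card K * level_count (orth (orth W u) v) a"
proof -
  define W' where "W' = orth (orth W u) v"
  note bij = orth_decomp_hyperbolic[OF assms(1-6), folded W'_def]
  have F_sum: "F (s * u + t * v + w) = s * t + F w" if "s \<in> K" "t \<in> K" "w \<in> W'" for s t w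
    using that uv F_scale polar_scale_left polar_scale_right
    by (simp add: F_add polar_add_left W'_def orth_def polar_commute[of w])
  have "level_count W a = card {p \<in> W' \<times> K \<times> K. F ((\<lambda>(w, s, t). s * u + t * v + w) p) = a}"
    unfolding level_count_def by (rule card_Collect_bij_betw[OF bij])
  also have "\<dots> = card {p \<in> W' \<times> K \<times> K. fst (snd p) * snd (snd p) = a - F (fst p)}"
    by (rule arg_cong[where f = card]) (auto simp: F_sum eq_diff_eq)
  also have "\<dots> = (\<Sum>w\<in>W'. card {p \<in> K \<times> K. fst p * snd p = a - F w})"
    by (rule card_Times_Collect) auto
  also have "\<dots> = (\<Sum>w\<in>W'. (card K - 1) + (if F w = a then card K else 0))"
    using card_pairs_mult_eq diff_closed[OF a F_closed] card_ge_two by (intro sum.cong) auto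
  also have "\<dots> = (card K - 1) * card W' + card K * level_count W' a"
    by (simp add: sum.distrib sum.If_cases level_count_def Int_def)
  finally show ?thesis unfolding W'_def .
qed

lemma hyperbolic_partner:
  assumes W: "is_subspace W" and u: "u \<in> W" "F u = 0" and y: "y \<in> W" "polar u y \<noteq> 0"
  shows "\<exists>v\<in>W. F v = 0 \<and> polar u v = 1"
proof -
  define v0 where "v0 = inverse (polar u y) * y"
  have v0: "v0 \<in> W" "polar u v0 = 1"
    unfolding v0_def using y is_subspaceD(3)[OF W inverse_closed[OF polar_closed]]
    by (auto simp: polar_scale_right[OF inverse_closed[OF polar_closed]])
  \<comment> \<open>Correcting \<open>v0\<close> by a multiple of the isotropic \<open>u\<close> kills \<open>F v0\<close> without changing \<open>polar u v0\<close>.\<close>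
  define t where "t = - F v0"
  have t: "t \<in> K" unfolding t_def using uminus_closed F_closed by simp
  define v where "v = v0 + t * u"
  have "v \<in> W" unfolding v_def using is_subspaceD[OF W] v0(1) u(1) t by simp
  moreover have "polar u v = 1"
    unfolding v_def using v0(2) u(2) t by (simp add: polar_add_right polar_scale_right polar_self)
  moreover have "F v = 0"
  proof -
    have "F v0 + t = 0" unfolding t_def by simp
    then show ?thesis unfolding v_def using v0(2) u(2) t F_scale[OF t] polar_commute[of v0 u]
      by (simp add: F_add polar_scale_right)
  qed
  ultimately show ?thesis by blast
qed

lemma isotropic_of_orthogonal_triple:
  assumes W: "is_subspace W" and x: "x0 \<in> W" "x1 \<in> W" "x2 \<in> W"
    and anisotropic: "F x0 \<noteq> 0" "F x1 \<noteq> 0" "F x2 \<noteq> 0"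
    and orthogonal: "polar x0 x1 = 0" "polar x0 x2 = 0" "polar x1 x2 = 0"
  shows "\<exists>y\<in>W. F y = 0 \<and> polar y x2 \<noteq> 0"
proof -
  obtain s t where st: "s \<in> K" "t \<in> K" "F x0 * s\<^sup>2 + F x1 * t\<^sup>2 = - F x2"
    using binary_form_represents[OF two_neq_zero, of "F x0" "F x1" "- F x2"]
      anisotropic F_closed uminus_closed by auto
  define y where "y = s * x0 + t * x1 + x2"
  have "y \<in> W" unfolding y_def using is_subspaceD[OF W] x st by simp
  moreover have "F y = F x0 * s\<^sup>2 + F x1 * t\<^sup>2 + F x2"
    unfolding y_def using st orthogonal polar_commute[of x1 x0]
    by (simp add: F_add F_scale polar_add_left polar_scale_left polar_scale_right mult.commute)
  moreover have "polar y x2 = 2 * F x2"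
    unfolding y_def using st orthogonal
    by (simp add: polar_add_left polar_scale_left polar_self)
  ultimately show ?thesis using st(3) anisotropic(3) two_neq_zero by auto
qed

lemma level_count_binary:
  assumes W: "is_subspace W" and x0: "x0 \<in> W" "F x0 \<noteq> 0"
    and x1: "x1 \<in> orth W x0" "F x1 \<noteq> 0"
    and null: "\<forall>w\<in>orth (orth W x0) x1. F w = 0"
  shows "level_count W a = card (orth (orth W x0) x1) * binary_count (F x0) (F x1) a"
proof -
  define W2 where "W2 = orth (orth W x0) x1"
  have "level_count W a
      = (\<Sum>s\<in>K. \<Sum>t\<in>K. level_count W2 (a - s\<^sup>2 * F x0 - t\<^sup>2 * F x1))"
    unfolding W2_def level_count_anisotropic_split(1)[OF W x0]
      level_count_anisotropic_split(1)[OF is_subspace_orth[OF W] x1] ..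
  also have "\<dots> = (\<Sum>s\<in>K. card W2 * card {t \<in> K. F x0 * s\<^sup>2 + F x1 * t\<^sup>2 = a})"
  proof (intro sum.cong refl)
    fix s
    have "level_count W2 (a - s\<^sup>2 * F x0 - t\<^sup>2 * F x1)
        = (if F x0 * s\<^sup>2 + F x1 * t\<^sup>2 = a then card W2 else 0)" for t
      using level_count_null[OF null[folded W2_def]] by (auto simp: algebra_simps)
    then show "(\<Sum>t\<in>K. level_count W2 (a - s\<^sup>2 * F x0 - t\<^sup>2 * F x1))
        = card W2 * card {t \<in> K. F x0 * s\<^sup>2 + F x1 * t\<^sup>2 = a}"
      by (simp add: sum.inter_filter[symmetric])
  qed
  also have "\<dots> = card W2 * binary_count (F x0) (F x1) a"
    unfolding binary_count_def by (subst card_Times_Collect) (auto simp: sum_distrib_left)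
  finally show ?thesis unfolding W2_def .
qed

text \<open>If all isotropic vectors lie in the radical, the form is anisotropic of rank at most 2 modulo the
  radical, since ternary forms are isotropic; rank 1 is excluded by the unbalanced zero count.\<close>

lemma level_count_eq_if_isotropic_orthogonal:
  assumes W: "is_subspace W"
    and isotropic: "\<And>u y. u \<in> W \<Longrightarrow> F u = 0 \<Longrightarrow> y \<in> W \<Longrightarrow> polar u y = 0"
    and unbalanced: "level_count W 0 * card K \<noteq> card W"
    and a: "a \<in> K - {0}" and b: "b \<in> K - {0}"
  shows "level_count W a = level_count W b"
proof (cases "\<forall>x\<in>W. F x = 0")
  case True
  then show ?thesis using level_count_null a b by simp
next
  case False
  then obtain x0 where x0: "x0 \<in> W" "F x0 \<noteq> 0" by auto
  define W1 where "W1 = orth W x0"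
  have W1: "is_subspace W1" unfolding W1_def by (rule is_subspace_orth[OF W])
  show ?thesis
  proof (cases "\<forall>x\<in>W1. F x = 0")
    case True
    have "level_count W 0 = (\<Sum>s\<in>K. if s = 0 then card W1 else 0)"
      unfolding level_count_anisotropic_split(1)[OF W x0, folded W1_def] level_count_null[OF True]
      using x0(2) by (intro sum.cong) auto
    then have "level_count W 0 = card W1" using zero_closed by simp
    then show ?thesis
      using unbalanced level_count_anisotropic_split(2)[OF W x0, folded W1_def] by simp
  next
    case False
    then obtain x1 where x1: "x1 \<in> W1" "F x1 \<noteq> 0" by auto
    define W2 where "W2 = orth W1 x1"
    have null: "\<forall>x\<in>W2. F x = 0"
    proof (rule ccontr)
      assume "\<not> ?thesis"
      then obtain x2 where x2: "x2 \<in> W2" "F x2 \<noteq> 0" by auto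
      have "x1 \<in> W" "x2 \<in> W" using x1(1) x2(1) unfolding W1_def W2_def orth_def by auto
      with isotropic_of_orthogonal_triple[OF W x0(1) _ _ x0(2) x1(2) x2(2)] x1(1) x2(1)
      obtain y where "y \<in> W" "F y = 0" "polar y x2 \<noteq> 0"
        unfolding W1_def W2_def orth_def by auto
      with isotropic \<open>x2 \<in> W\<close> show False by blast
    qed
    have "level_count W c = card W2 * binary_count (F x0) (F x1) c" for c
      using level_count_binary[OF W x0 x1[unfolded W1_def]] null unfolding W1_def W2_def by blast
    then show ?thesis
      using binary_count_const[OF two_neq_zero _ _ b a] x0(2) x1(2) F_closed by simp
  qed
qed

theorem level_count_eq:
  assumes "is_subspace W" and "level_count W 0 * card K \<noteq> card W"
    and "a \<in> K - {0}" and "b \<in> K - {0}"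
  shows "level_count W a = level_count W b"
  using assms
proof (induction "card W" arbitrary: W rule: less_induct)
  case less
  note W = less.prems(1)
  show ?case
  proof (cases "\<exists>u\<in>W. F u = 0 \<and> (\<exists>y\<in>W. polar u y \<noteq> 0)")
    case True
    then obtain u y where u: "u \<in> W" "F u = 0" and y: "y \<in> W" "polar u y \<noteq> 0" by auto
    obtain v where v: "v \<in> W" "F v = 0" "polar u v = 1"
      using hyperbolic_partner[OF W u y] by blast
    define W' where "W' = orth (orth W u) v"
    have W': "is_subspace W'" unfolding W'_def using is_subspace_orth W by blast
    have count: "level_count W e = (card K - 1) * card W' + card K * level_count W' e" if "e \<in> K" for e
      unfolding W'_def using level_count_hyperbolic_split[OF W u(1) v(1) u(2) v(2,3) that] .
    have card_W: "card W = card K * card K * card W'"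
      unfolding W'_def by (rule card_hyperbolic_split[OF W u(1) v(1) u(2) v(2,3)])
    obtain m where m: "card K = Suc m" using card_ge_two not0_implies_Suc by fastforce
    have "card W' > 0" using is_subspaceD(1)[OF W'] by (auto simp: card_gt_0_iff)
    moreover have "m > 0" using m card_ge_two by simp
    ultimately have "card W' < card W" unfolding card_W m by simp
    moreover have "level_count W' 0 * card K \<noteq> card W'"
    proof
      assume "level_count W' 0 * card K = card W'"
      then have "level_count W 0 * card K = card W"
        unfolding count[OF zero_closed] card_W m by (simp add: algebra_simps)
      with less.prems(2) show False ..
    qed
    ultimately have "level_count W' a = level_count W' b"
      using less.hyps W' less.prems(3,4) by blast
    then show ?thesis using count less.prems(3,4) by simp
  qed (use level_count_eq_if_isotropic_orthogonal less.prems in blast)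
qed

end

section \<open>Frobenius and traces in finite fields\<close>

lemma finite_field_power_card:
  fixes x :: "'a::{finite,field}"
  shows "x ^ CARD('a) = x"
proof (cases "x = 0")
  case False
  let ?U = "UNIV - {0::'a}"
  have "inj_on ((*) x) ?U" "(*) x ` ?U \<subseteq> ?U" using False by (auto intro: inj_onI)
  then have "bij_betw ((*) x) ?U ?U" by (simp add: bij_betw_def endo_inj_surj)
  then have "(\<Prod>y\<in>?U. x * y) = \<Prod>?U" by (rule prod.reindex_bij_betw)
  then have "x ^ card ?U * \<Prod>?U = 1 * \<Prod>?U" by (simp add: prod.distrib)
  then have "x ^ card ?U = 1" by (subst (asm) mult_cancel_right) simp
  moreover have "CARD('a) = Suc (card ?U)"
    using card_Diff_singleton[of 0 "UNIV :: 'a set"] finite_UNIV_card_ge_0[where 'a = 'a] by simp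
  ultimately show ?thesis by (simp only: power_Suc mult_1_right)
qed (simp add: power_0_left)

lemma power_power_fixed: "(t::'a::monoid_mult) ^ b = t \<Longrightarrow> t ^ (b ^ i) = t"
  by (induction i) (simp_all add: power_mult mult.commute[of b])

lemma of_nat_CARD_eq_0: "of_nat CARD('a::{finite,ring_1}) = (0::'a)"
proof -
  have "(\<Sum>x\<in>UNIV. x + 1) = (\<Sum>x\<in>UNIV. x :: 'a)"
    by (rule sum.reindex_bij_witness[of _ "\<lambda>x. x - 1" "\<lambda>x. x + 1"]) auto
  then show ?thesis by (simp add: sum.distrib)
qed

lemma CHAR_eq_prime_of_card:
  assumes "prime p" "CARD('a::{finite,field}) = p ^ e"
  shows "CHAR('a) = p"
proof -
  have "prime CHAR('a)" by (intro prime_CHAR_semidom finite_imp_CHAR_pos) simp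
  moreover have "CHAR('a) dvd p ^ e"
    using of_nat_CARD_eq_0[where 'a = 'a] unfolding of_nat_eq_0_iff_char_dvd assms(2) .
  ultimately show ?thesis using assms(1) prime_dvd_power primes_dvd_imp_eq by blast
qed

lemma card_power_fixed_le:
  assumes "b \<ge> 2"
  shows "card {x::'a::field. x ^ b = x} \<le> b"
proof -
  define P :: "'a poly" where "P = monom 1 b - monom 1 1"
  have "coeff P b \<noteq> 0" "degree P \<le> b"
    unfolding P_def using assms by (auto simp: coeff_monom intro!: degree_le)
  then have "card {x. poly P x = 0} \<le> b"
    using card_poly_roots_bound[of P] by fastforce
  then show ?thesis unfolding P_def by (simp add: poly_monom)
qed

lemma card_frob_trace_zero_le:
  assumes "b \<ge> 2" "n \<ge> 1"
  shows "card {x::'a::field. frob_trace b n x = 0} \<le> b ^ (n - 1)"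
proof -
  define P :: "'a poly" where "P = (\<Sum>i<n. monom 1 (b ^ i))"
  have exp_eq: "b ^ i = b ^ j \<longleftrightarrow> i = j" for i j using assms(1) by (simp add: power_inject_exp)
  have exp_le: "b ^ i \<le> b ^ (n - 1)" if "i < n" for i using that assms(1) by (intro power_increasing) auto
  have "coeff P (b ^ (n - 1)) = 1"
    unfolding P_def using assms(2) by (simp add: coeff_sum coeff_monom exp_eq)
  moreover have "degree P \<le> b ^ (n - 1)"
    unfolding P_def using exp_le
    by (intro degree_le allI impI) (force simp: coeff_sum coeff_monom intro!: sum.neutral)
  ultimately have "card {x. poly P x = 0} \<le> b ^ (n - 1)"
    using card_poly_roots_bound[of P] by fastforce
  then show ?thesis unfolding P_def frob_trace_def by (simp add: poly_sum poly_monom)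
qed

lemma card_le_card_kernel_mult_card_image:
  fixes f :: "'a::ab_group_add \<Rightarrow> 'b::ab_group_add"
  assumes "finite A" and diff: "\<And>x y. x \<in> A \<Longrightarrow> y \<in> A \<Longrightarrow> x - y \<in> A"
    and hom: "\<And>x y. x \<in> A \<Longrightarrow> y \<in> A \<Longrightarrow> f (x - y) = f x - f y"
  shows "card A \<le> card {x \<in> A. f x = 0} * card (f ` A)"
proof -
  have fibre: "card {x \<in> A. f x = y} \<le> card {x \<in> A. f x = 0}" if "y \<in> f ` A" for y
  proof -
    from that obtain x0 where "x0 \<in> A" "f x0 = y" by auto
    then have "(\<lambda>x. x - x0) ` {x \<in> A. f x = y} \<subseteq> {x \<in> A. f x = 0}" using diff hom by auto
    then show ?thesis using \<open>finite A\<close> by (intro card_inj_on_le[OF inj_onI]) auto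
  qed
  have "A = (\<Union>y\<in>f ` A. {x \<in> A. f x = y})" by auto
  then have "card A \<le> (\<Sum>y\<in>f ` A. card {x \<in> A. f x = y})"
    using card_UN_le[of "f ` A" "\<lambda>y. {x \<in> A. f x = y}"] \<open>finite A\<close> by simp
  also have "\<dots> \<le> card {x \<in> A. f x = 0} * card (f ` A)"
    using sum_bounded_above[OF fibre] by (simp add: mult.commute)
  finally show ?thesis .
qed

context
  fixes b j :: nat
  assumes prime_char: "prime CHAR('a::{finite,field})" and b_eq: "b = CHAR('a) ^ j"
begin

lemma frobenius_add: "(x + y :: 'a) ^ (b ^ i) = x ^ (b ^ i) + y ^ (b ^ i)"
  by (rule freshmans_dream'[OF prime_char]) (simp add: b_eq power_mult[symmetric])

lemma frobenius_sum: "(sum f A :: 'a) ^ (b ^ i) = (\<Sum>x\<in>A. f x ^ (b ^ i))"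
  by (rule freshmans_dream_sum'[OF prime_char]) (simp add: b_eq power_mult[symmetric])

lemma frobenius_uminus: "(- x :: 'a) ^ (b ^ i) = - (x ^ (b ^ i))"
proof -
  have "b > 0" using b_eq prime_gt_0_nat[OF prime_char] by simp
  then have "(- x) ^ (b ^ i) + x ^ (b ^ i) = 0" by (simp flip: frobenius_add)
  then show ?thesis by (simp add: eq_neg_iff_add_eq_0)
qed

lemma frobenius_diff: "(x - y :: 'a) ^ (b ^ i) = x ^ (b ^ i) - y ^ (b ^ i)"
  using frobenius_add[of x "- y" i] by (simp add: frobenius_uminus)

lemma frob_trace_add: "frob_trace b n (x + y :: 'a) = frob_trace b n x + frob_trace b n y"
  unfolding frob_trace_def by (simp add: frobenius_add sum.distrib)

lemma frob_trace_diff: "frob_trace b n (x - y :: 'a) = frob_trace b n x - frob_trace b n y"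
  using frob_trace_add[of n "x - y" y] by simp

lemma frob_trace_scale: "t ^ b = t \<Longrightarrow> frob_trace b n (t * z :: 'a) = t * frob_trace b n z"
  unfolding frob_trace_def by (simp add: power_mult_distrib power_power_fixed sum_distrib_left)

lemma frob_trace_power_fixed:
  assumes "z ^ (b ^ n) = (z :: 'a)"
  shows "frob_trace b n z ^ b = frob_trace b n z"
proof -
  have "frob_trace b n z ^ b = (\<Sum>i<n. z ^ (b ^ Suc i))"
    unfolding frob_trace_def using frobenius_sum[of "\<lambda>i. z ^ (b ^ i)" "{..<n}" 1]
    by (simp add: power_mult[symmetric] mult.commute)
  also have "\<dots> = frob_trace b n z"
    unfolding frob_trace_def using sum.lessThan_Suc_shift[of "\<lambda>i. z ^ (b ^ i)" n] assms by simp
  finally show ?thesis .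
qed

lemma frob_trace_kernel_card:
  assumes b: "b \<ge> 2" and n: "n \<ge> 1" and card_fixed: "card {z::'a. z ^ (b ^ n) = z} = b ^ n"
  shows "card {z::'a. z ^ (b ^ n) = z \<and> frob_trace b n z = 0} = b ^ (n - 1)"
    and "card {y::'a. y ^ b = y} = b"
proof -
  \<comment> \<open>\<open>b\<^sup>n = |A| \<le> |ker| \<cdot> |image|\<close>, where \<open>|ker| \<le> b\<^bsup>n-1\<^esup>\<close> and the image consists of fixed points of \<open>x \<mapsto> x\<^sup>b\<close>.\<close>
  define A where "A = {z::'a. z ^ (b ^ n) = z}"
  define ker where "ker = {z \<in> A. frob_trace b n z = 0}"
  have diff: "x - y \<in> A" if "x \<in> A" "y \<in> A" for x y
    using that by (simp add: A_def frobenius_diff)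
  have "card A \<le> card ker * card (frob_trace b n ` A)"
    unfolding ker_def by (rule card_le_card_kernel_mult_card_image) (auto intro: diff simp: frob_trace_diff)
  also have "\<dots> \<le> card ker * card {y::'a. y ^ b = y}"
    by (intro mult_le_mono2 card_mono) (auto simp: A_def frob_trace_power_fixed)
  finally have le: "b ^ (n - 1) * b \<le> card ker * card {y::'a. y ^ b = y}"
    using card_fixed n power_minus_mult[of n b] unfolding A_def by simp
  have "card ker \<le> card {x::'a. frob_trace b n x = 0}"
    unfolding ker_def by (intro card_mono) auto
  then have ker_le: "card ker \<le> b ^ (n - 1)"
    using card_frob_trace_zero_le[OF b n, where 'a = 'a] by linarith
  have fixed_le: "card {y::'a. y ^ b = y} \<le> b" by (rule card_power_fixed_le[OF b])
  have "b ^ (n - 1) * b \<le> b ^ (n - 1) * card {y::'a. y ^ b = y}"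
    using le mult_le_mono1[OF ker_le] order_trans by blast
  then have "card {y::'a. y ^ b = y} = b" using fixed_le b by simp
  moreover from this have "card ker = b ^ (n - 1)"
    using le ker_le b by simp
  ultimately show "card {z::'a. z ^ (b ^ n) = z \<and> frob_trace b n z = 0} = b ^ (n - 1)"
    and "card {y::'a. y ^ b = y} = b"
    by (simp_all add: ker_def A_def)
qed

lemma card_power_fixed_eq:
  assumes "b \<ge> 2" "n \<ge> 1" "CARD('a) = b ^ n"
  shows "card {x::'a. x ^ b = x} = b"
proof -
  have "{z::'a. z ^ (b ^ n) = z} = UNIV"
    using finite_field_power_card[where 'a = 'a] assms(3) by simp
  then show ?thesis using frob_trace_kernel_card(2)[OF assms(1,2)] assms(3) by simp
qed

lemma subfield_power_fixed: "subfield {x::'a. x ^ b = x}"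
  using frobenius_add[of _ _ 1] frobenius_uminus[of _ 1]
  by unfold_locales (auto simp: power_mult_distrib power_inverse b_eq power_0_left prime_gt_0_nat[OF prime_char])

lemma frob_trace_trans: "frob_trace b (d * n) (z::'a) = frob_trace b d (frob_trace (b ^ d) n z)"
proof -
  have "frob_trace b (d * n) z = (\<Sum>i<n. \<Sum>l\<in>{i * d..<i * d + d}. z ^ (b ^ l))"
    unfolding frob_trace_def by (simp add: sum.nat_group mult.commute)
  also have "\<dots> = (\<Sum>i<n. \<Sum>l<d. z ^ (b ^ (i * d + l)))"
  proof (rule sum.cong[OF refl])
    fix i
    show "(\<Sum>l\<in>{i * d..<i * d + d}. z ^ (b ^ l)) = (\<Sum>l<d. z ^ (b ^ (i * d + l)))"
      using sum.shift_bounds_nat_ivl[of "\<lambda>l. z ^ (b ^ l)" 0 "i * d" d]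
      by (simp add: atLeast0LessThan add.commute)
  qed
  also have "\<dots> = (\<Sum>i<n. \<Sum>l<d. (z ^ ((b ^ d) ^ i)) ^ (b ^ l))"
    by (simp add: power_add ac_simps flip: power_mult)
  also have "\<dots> = frob_trace b d (frob_trace (b ^ d) n z)"
    unfolding frob_trace_def by (simp add: frobenius_sum sum.swap[of _ "{..<n}"])
  finally show ?thesis .
qed

lemma linearized_add: "linearized b c m (x + y :: 'a) = linearized b c m x + linearized b c m y"
  unfolding linearized_def by (simp add: frobenius_add distrib_left sum.distrib)

lemma linearized_scale: "t ^ b = t \<Longrightarrow> linearized b c m (t * x :: 'a) = t * linearized b c m x"
  unfolding linearized_def
  by (simp add: power_mult_distrib power_power_fixed sum_distrib_left mult.left_commute)

lemma quadratic_form_trace_form: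
  assumes two: "(2::'a) \<noteq> 0" and card: "CARD('a) = b ^ n"
  shows "quadratic_form {x::'a. x ^ b = x} (\<lambda>x. frob_trace b n (x * linearized b c m x))"
proof -
  interpret subfield "{x::'a. x ^ b = x}" by (rule subfield_power_fixed)
  let ?Tr = "frob_trace b n" and ?L = "linearized b c m"
  have polar: "?Tr ((x + y) * ?L (x + y)) - ?Tr (x * ?L x) - ?Tr (y * ?L y) = ?Tr (x * ?L y + y * ?L x)"
    for x y
    by (simp add: linearized_add distrib_left distrib_right frob_trace_add)
  show ?thesis
  proof (unfold_locales, unfold polar)
    show "?Tr (x * ?L x) \<in> {x. x ^ b = x}" for x
      using frob_trace_power_fixed finite_field_power_card[of "x * ?L x"] card by simp
    show "?Tr (t * x * ?L (t * x)) = t\<^sup>2 * ?Tr (x * ?L x)" if "t \<in> {x. x ^ b = x}" for t x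
      using that by (simp add: linearized_scale frob_trace_scale[symmetric] power2_eq_square ac_simps)
    show "?Tr ((x + y) * ?L z + z * ?L (x + y)) = ?Tr (x * ?L z + z * ?L x) + ?Tr (y * ?L z + z * ?L y)"
      for x y z
      by (simp add: linearized_add algebra_simps frob_trace_add)
    show "?Tr (t * x * ?L y + y * ?L (t * x)) = t * ?Tr (x * ?L y + y * ?L x)"
      if "t \<in> {x. x ^ b = x}" for t x y
      using that by (simp add: linearized_scale frob_trace_scale[symmetric] algebra_simps)
  qed (fact two)
qed

end

section \<open>The trace form\<close>

context quadratic_form
begin

lemma is_subspace_UNIV: "is_subspace UNIV"
  unfolding is_subspace_def by simp

lemma card_vimage_eq_level_counts:
  assumes unbalanced: "level_count UNIV 0 * card K \<noteq> CARD('a)" and H: "0 \<in> H" "H \<subseteq> K"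
  shows "card {x. F x \<in> H} = level_count UNIV 0 + (card H - 1) * level_count UNIV 1"
proof -
  have "card {x. F x \<in> H} = (\<Sum>a\<in>H. level_count UNIV a)"
    unfolding level_count_def by (subst card_UN_disjoint[symmetric]) (auto intro: arg_cong[where f = card])
  also have "\<dots> = level_count UNIV 0 + (\<Sum>a\<in>H - {0}. level_count UNIV a)"
    using H(1) by (simp add: sum.remove)
  also have "(\<Sum>a\<in>H - {0}. level_count UNIV a) = (\<Sum>a\<in>H - {0}. level_count UNIV 1)"
  proof (rule sum.cong[OF refl])
    fix a assume "a \<in> H - {0}"
    then show "level_count UNIV a = level_count UNIV 1"
      using level_count_eq[OF is_subspace_UNIV unbalanced, of a 1] H(2) one_closed by auto
  qed
  finally show ?thesis using H(1) by (simp add: card_Diff_singleton)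
qed

end

lemma two_neq_zero_of_odd_char:
  assumes "q = CHAR('a::{finite,field}) ^ k" "k \<ge> 1" "odd q"
  shows "(2::'a) \<noteq> 0"
proof
  assume "(2::'a) = 0"
  then have "CHAR('a) dvd 2" using of_nat_eq_0_iff_char_dvd[of 2, where 'a = 'a] by simp
  then have "CHAR('a) \<le> 2" "CHAR('a) \<noteq> 0" by (auto dest: dvd_imp_le simp: finite_imp_CHAR_pos)
  moreover have "CHAR('a) \<noteq> 1" by simp
  ultimately have "CHAR('a) = 2" by linarith
  then show False using assms by simp
qed

lemma trace_form_zero_counts:
  fixes c :: "nat \<Rightarrow> 'a::{finite,field}" and m :: nat
  assumes p: "prime p" "k \<ge> 1" "q = p ^ k" and "odd q"
    and d: "d \<ge> 1" and n: "n \<ge> 1" and card: "CARD('a) = q ^ (d * n)"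
  defines "F \<equiv> \<lambda>x. frob_trace (q ^ d) n (x * linearized (q ^ d) c m x)"
  assumes unbalanced: "card {x. F x = 0} * q ^ d \<noteq> CARD('a)"
  obtains C where "CARD('a) = card {x. F x = 0} + (q ^ d - 1) * C"
    and "card {x. frob_trace q (d * n) (x * linearized (q ^ d) c m x) = 0}
          = card {x. F x = 0} + (q ^ (d - 1) - 1) * C"
proof -
  have "CHAR('a) = p" using CHAR_eq_prime_of_card[OF p(1)] card p(3) by (simp flip: power_mult)
  then have prime_char: "prime CHAR('a)" and q: "q = CHAR('a) ^ k" "k \<ge> 1" "odd q"
    using p assms(4) by simp_all
  have "CHAR('a) ^ 1 \<le> CHAR('a) ^ k"
    using q(2) prime_gt_0_nat[OF prime_char] by (intro power_increasing) auto
  then have q2: "q \<ge> 2" using q(1) prime_ge_2_nat[OF prime_char] by simp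
  moreover have "q ^ 1 \<le> q ^ d" using d q2 by (intro power_increasing) auto
  ultimately have Q2: "q ^ d \<ge> 2" by simp
  have Q_eq: "q ^ d = CHAR('a) ^ (k * d)" using q by (simp add: power_mult)
  interpret quadratic_form "{x::'a. x ^ q ^ d = x}" F
    unfolding F_def using two_neq_zero_of_odd_char[OF q] card
    by (intro quadratic_form_trace_form[OF prime_char Q_eq]) (simp_all add: power_mult)
  have card_K: "card {x::'a. x ^ q ^ d = x} = q ^ d"
    using card_power_fixed_eq[OF prime_char Q_eq Q2 n] card by (simp add: power_mult)
  define H where "H = {z::'a. z ^ (q ^ d) = z \<and> frob_trace q d z = 0}"
  have card_H: "card H = q ^ (d - 1)"
    unfolding H_def using frob_trace_kernel_card(1)[OF prime_char q(1) q2 d] card_K by simp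
  have zeros: "{x. frob_trace q (d * n) (x * linearized (q ^ d) c m x) = 0} = {x. F x \<in> H}"
    unfolding H_def F_def frob_trace_trans[OF prime_char q(1)] using F_closed[unfolded F_def] by auto
  have "level_count UNIV 0 * card {x::'a. x ^ q ^ d = x} \<noteq> CARD('a)"
    using unbalanced card_K by (simp add: level_count_def)
  note count = card_vimage_eq_level_counts[OF this]
  show ?thesis
  proof (rule that[of "level_count UNIV 1"])
    show "CARD('a) = card {x. F x = 0} + (q ^ d - 1) * level_count UNIV 1"
      using count[of "{x. x ^ q ^ d = x}"] card_K F_closed zero_closed by (simp add: level_count_def)
    show "card {x. frob_trace q (d * n) (x * linearized (q ^ d) c m x) = 0}
        = card {x. F x = 0} + (q ^ (d - 1) - 1) * level_count UNIV 1"
    proof -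
      have "0 \<in> H" "H \<subseteq> {x. x ^ q ^ d = x}"
        unfolding H_def frob_trace_def using q2 by (auto simp: power_0_left)
      then show ?thesis unfolding zeros using count card_H by (simp add: level_count_def)
    qed
  qed
qed

lemma sign_eq_of_real_counts:
  fixes Q q h A N0 C P P' :: real and l l' :: int
  assumes Q: "Q = q * h" and q: "q > 1" and h: "h \<ge> 1" and P: "P > 0" "P' > 0"
    and N0: "N0 = A + l * (Q - 1) * P"
    and total: "Q * A = N0 + (Q - 1) * C"
    and N0': "N0 + (h - 1) * C = h * A + l' * (q - 1) * P'"
    and l: "l \<in> {-1, 0, 1}" "l' \<in> {-1, 0, 1}"
  shows "l' = l"
proof -
  have "q \<le> q * h" using q h by simp
  then have "Q > 1" using Q q by linarith
  moreover have "(Q - 1) * C = (Q - 1) * (A - l * P)" using total N0 by (simp add: algebra_simps)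
  ultimately have C: "C = A - l * P" by simp
  have "(q - 1) * (l' * P') = (q - 1) * (l * (h * P))"
    using N0' unfolding N0 C Q by (simp add: algebra_simps)
  then have "sgn (l' * P') = sgn (l * (h * P))" using q by simp
  then have "sgn (real_of_int l') = sgn (real_of_int l)" using h P by (simp add: sgn_mult)
  then show ?thesis using l by auto
qed

lemma sign_eq_of_zero_counts:
  fixes q d n N0 C :: nat and P P' :: real and l l' :: int
  assumes q: "q > 1" and d: "d \<ge> 1" and n: "n \<ge> 1" and P: "P > 0" "P' > 0"
    and N0: "real N0 = real (q ^ d) ^ (n - 1) + l * (real (q ^ d) - 1) * P"
    and total: "(q ^ d) ^ n = N0 + (q ^ d - 1) * C"
    and N0': "real (N0 + (q ^ (d - 1) - 1) * C) = real q ^ (d * n - 1) + l' * (real q - 1) * P'"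
    and l: "l \<in> {-1, 0, 1}" "l' \<in> {-1, 0, 1}"
  shows "l' = l"
proof (rule sign_eq_of_real_counts[OF _ _ _ P N0 _ _ l])
  have "real q ^ (d * n - 1) = real (q ^ (d - 1)) * real (q ^ d) ^ (n - 1)"
    using d n by (simp add: power_add[symmetric] power_mult[symmetric] algebra_simps)
  moreover have "1 \<le> q ^ (d - 1)" using q by simp
  ultimately show "real N0 + (real (q ^ (d - 1)) - 1) * real C
      = real (q ^ (d - 1)) * real (q ^ d) ^ (n - 1) + l' * (real q - 1) * P'"
    using N0' by (simp add: of_nat_diff)
  have "real (q ^ d) * real (q ^ d) ^ (n - 1) = real ((q ^ d) ^ n)"
    using n by (simp flip: power_Suc)
  moreover have "1 \<le> q ^ d" using q by simp
  ultimately show "real (q ^ d) * real (q ^ d) ^ (n - 1) = real N0 + (real (q ^ d) - 1) * real C"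
    unfolding total by (simp add: of_nat_diff)
  show "real (q ^ d) = real q * real (q ^ (d - 1))" using d by (simp flip: power_Suc)
qed (use q in auto)

theorem mainTheorem2:
  fixes q d n m :: nat and c :: "nat \<Rightarrow> 'a::{finite,field}"
    and w w' :: nat and lama lama' :: int
  assumes q_pp: "prime_power q" and q_odd: "odd q"
    and d_pos: "d \<ge> 1" and n_pos: "n \<ge> 1"
    and card_field: "CARD('a) = q ^ (d * n)"
    and w_def: "card (qf_radical (\<lambda>x::'a. frob_trace (q ^ d) n (x * linearized (q ^ d) c m x)))
                 = (q ^ d) ^ w"
    and w'_def: "card (qf_radical (\<lambda>x::'a. frob_trace q (d * n) (x * linearized (q ^ d) c m x)))
                 = q ^ w'"
    and lam: "lama \<in> {-1, 0, 1}"
    and lam_count: "real (card {x::'a. frob_trace (q ^ d) n (x * linearized (q ^ d) c m x) = 0})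
        = real (q ^ d) ^ (n - 1)
          + of_int lama * (real (q ^ d) - 1) * real (q ^ d) powr (real (n + w) / 2 - 1)"
    and lam': "lama' \<in> {-1, 0, 1}"
    and lam'_count: "real (card {x::'a. frob_trace q (d * n) (x * linearized (q ^ d) c m x) = 0})
        = real q ^ (d * n - 1)
          + of_int lama' * (real q - 1) * real q powr (real (d * n + w') / 2 - 1)"
    and lam_nz: "lama \<noteq> 0"
  shows "lama' = lama"
proof -
  obtain p k where p: "prime p" "k \<ge> 1" "q = p ^ k" using q_pp unfolding prime_power_def by auto
  have q1: "q > 1" using p one_less_power[of p k] prime_gt_1_nat[of p] by simp
  define N0 where "N0 = card {x::'a. frob_trace (q ^ d) n (x * linearized (q ^ d) c m x) = 0}"
  have "N0 * q ^ d \<noteq> CARD('a)"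
  proof
    assume "N0 * q ^ d = CARD('a)"
    then have "real N0 = real (q ^ d) ^ (n - 1)"
      using card_field n_pos q1 by (simp add: power_mult power_eq_if[of _ n] split: if_splits)
    moreover have "real (q ^ d) > 1" using q1 d_pos by (simp add: one_less_power)
    ultimately show False using lam_count lam_nz unfolding N0_def by (simp add: power_0_left)
  qed
  then obtain C where counts: "CARD('a) = N0 + (q ^ d - 1) * C"
    "card {x::'a. frob_trace q (d * n) (x * linearized (q ^ d) c m x) = 0} = N0 + (q ^ (d - 1) - 1) * C"
    using trace_form_zero_counts[OF p q_odd d_pos n_pos card_field] unfolding N0_def by blast
  have "(q ^ d) ^ n = N0 + (q ^ d - 1) * C" using counts(1) card_field by (simp add: power_mult)
  from sign_eq_of_zero_counts[OF q1 d_pos n_pos _ _ lam_count[folded N0_def] this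
      lam'_count[unfolded counts(2)] lam lam']
  show ?thesis using q1 by simp
qed

end
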